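(* Let $g\in\mathcal{PSD}$ with $\{T^k(x):x\in X^{\rm in},k\in\mathbb N\}\subseteq\operatorname{dom}(g)$. Then $g$ is $(X^{\rm in},T,\varphi)$-compatible if and only if there exists an $(X^{\rm in},T,\varphi)$-certificate of compatibility for $g$.
   Context: Standing data: nonempty $X^{\rm in}\subseteq\mathbb R^d$, $T:\mathbb R^d\to\mathbb R^d$, $\varphi:\mathbb R^d\to\mathbb R$ with $\varphi(0)=0$, $\nu_k=\sup_{x\in X^{\rm in}}\varphi(T^k(x))$ assumed finite for all $k$; $G^{>}_\nu=\{k:\nu_k>\limsup_n\nu_n\}$. $\mathcal{PSD}$: functions $P:\mathbb R^d\to[0,+\infty]$ taking some value in $(0,+\infty)$; $\operatorname{dom}(g)=\{x:g(x)<+\infty\}$. $I^\varphi=\overline{\operatorname{conv}}\{\varphi(T^k(x)):k\in\mathbb N,x\in X^{\rm in}\}$ (closed convex hull in $\mathbb R$). $\mathrm{SC}$ is the set of $\alpha:\mathbb R\to\mathbb R$ for which there is an interval $I$ with $\alpha(I)=[0,1]$ and $\alpha$ strictly increasing and continuous on $\operatorname{conv}(I^\varphi\cup I)$. An $(X^{\rm in},T,\varphi)$-certificate of compatibility for $g$ is $\alpha\in\mathrm{SC}$ such that $\alpha(\nu_k)>0$ for some $k\in G^{>}_\nu$ and $\alpha(\varphi(T^k(x)))\le g(T^k(x))$ for all $k\in\mathbb N$, $x\in X^{\rm in}$. $g$ is $(X^{\rm in},T,\varphi)$-compatible at $k\in G^{>}_\nu$ if there exist $\varepsilon>0,\eta>0$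 such that for all $x\in X^{\rm in}$, $j\in\mathbb N$ with $\varphi(T^j(x))>\nu_k-\eta$ one has $g(T^j(x))>\varepsilon$; $g$ is $(X^{\rm in},T,\varphi)$-compatible if it is so at some $k\in G^{>}_\nu$. *)

theory Defs
  imports "HOL-Analysis.Analysis" "HOL-Library.Extended_Real"
begin

definition nu :: "('a \<Rightarrow> 'a) \<Rightarrow> ('a \<Rightarrow> real) \<Rightarrow> 'a set \<Rightarrow> nat \<Rightarrow> real" where
  "nu T \<phi> Xin k = (SUP x\<in>Xin. \<phi> ((T ^^ k) x))"

definition Ggt :: "('a \<Rightarrow> 'a) \<Rightarrow> ('a \<Rightarrow> real) \<Rightarrow> 'a set \<Rightarrow> nat set" where
  "Ggt T \<phi> Xin = {k. ereal (nu T \<phi> Xin k) > limsup (\<lambda>n. ereal (nu T \<phi> Xin n))}"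

definition PSD :: "('a \<Rightarrow> ereal) set" where
  "PSD = {P. (\<forall>x. 0 \<le> P x) \<and> (\<exists>x. 0 < P x \<and> P x < \<infinity>)}"

definition dom_ext :: "('a \<Rightarrow> ereal) \<Rightarrow> 'a set" where
  "dom_ext g = {x. g x < \<infinity>}"

definition Iphi :: "('a \<Rightarrow> 'a) \<Rightarrow> ('a \<Rightarrow> real) \<Rightarrow> 'a set \<Rightarrow> real set" where
  "Iphi T \<phi> Xin = closure (convex hull {\<phi> ((T ^^ k) x) | k x. x \<in> Xin})"

definition SC :: "('a \<Rightarrow> 'a) \<Rightarrow> ('a \<Rightarrow> real) \<Rightarrow> 'a set \<Rightarrow> (real \<Rightarrow> real) set" where
  "SC T \<phi> Xin = {\<alpha>. \<exists>I::real set. is_interval I \<and> \<alpha> ` I = {0..1} \<and>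
      strict_mono_on (convex hull (Iphi T \<phi> Xin \<union> I)) \<alpha> \<and>
      continuous_on (convex hull (Iphi T \<phi> Xin \<union> I)) \<alpha>}"

definition certificate :: "'a set \<Rightarrow> ('a \<Rightarrow> 'a) \<Rightarrow> ('a \<Rightarrow> real) \<Rightarrow> ('a \<Rightarrow> ereal) \<Rightarrow> (real \<Rightarrow> real) \<Rightarrow> bool" where
  "certificate Xin T \<phi> g \<alpha> \<longleftrightarrow> \<alpha> \<in> SC T \<phi> Xin \<and>
     (\<exists>k\<in>Ggt T \<phi> Xin. \<alpha> (nu T \<phi> Xin k) > 0) \<and>
     (\<forall>k. \<forall>x\<in>Xin. ereal (\<alpha> (\<phi> ((T ^^ k) x))) \<le> g ((T ^^ k) x))"

definition compatible_at :: "'a set \<Rightarrow> ('a \<Rightarrow> 'a) \<Rightarrow> ('a \<Rightarrow> real) \<Rightarrow> ('a \<Rightarrow> ereal) \<Rightarrow> nat \<Rightarrow> bool" where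
  "compatible_at Xin T \<phi> g k \<longleftrightarrow> k \<in> Ggt T \<phi> Xin \<and>
     (\<exists>\<epsilon>>0. \<exists>\<eta>>0. \<forall>x\<in>Xin. \<forall>j. \<phi> ((T ^^ j) x) > nu T \<phi> Xin k - \<eta> \<longrightarrow> g ((T ^^ j) x) > ereal \<epsilon>)"

definition compatible :: "'a set \<Rightarrow> ('a \<Rightarrow> 'a) \<Rightarrow> ('a \<Rightarrow> real) \<Rightarrow> ('a \<Rightarrow> ereal) \<Rightarrow> bool" where
  "compatible Xin T \<phi> g \<longleftrightarrow> (\<exists>k\<in>Ggt T \<phi> Xin. compatible_at Xin T \<phi> g k)"

end

theory Submission
  imports Defs
begin

text \<open>If \<open>g\<close> exceeds \<open>\<epsilon>\<close> wherever \<open>\<phi> > \<nu>\<^sub>k - \<eta>\<close>, the affine map sending \<open>\<nu>\<^sub>k - \<eta>\<close> to \<open>0\<close>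
  and an upper bound \<open>M\<close> of all \<open>\<nu>\<^sub>n\<close> to \<open>\<epsilon>\<close> is a certificate: it is nonpositive up to
  \<open>\<nu>\<^sub>k - \<eta>\<close>, where \<open>g \<ge> 0\<close>, and at most \<open>\<epsilon>\<close> above; such an \<open>M\<close> exists because
  \<open>\<nu>\<^sub>k\<close> exceeds the limit superior. Conversely, a certificate \<open>\<alpha>\<close> is continuous and
  increasing at \<open>\<nu>\<^sub>k\<close>, so \<open>\<alpha> > \<alpha>(\<nu>\<^sub>k)/2\<close> on a half-line \<open>(\<nu>\<^sub>k - \<delta>, \<infinity>)\<close>, and
  \<open>g \<ge> \<alpha> \<circ> \<phi>\<close> along the orbits gives compatibility with \<open>\<epsilon> = \<alpha>(\<nu>\<^sub>k)/2\<close>.\<close>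

lemma bdd_above_of_limsup_less:
  fixes f :: "nat \<Rightarrow> real"
  assumes "limsup (\<lambda>n. ereal (f n)) < ereal c"
  shows "bdd_above (range f)"
proof -
  obtain N where "\<And>n. n \<ge> N \<Longrightarrow> f n < c"
    using Limsup_lessD[OF assms] unfolding eventually_sequentially by auto
  then have "range f \<subseteq> f ` {..<N} \<union> {..c}"
    by (auto intro: less_imp_le simp: not_less[symmetric])
  then show ?thesis
    by (rule bdd_above_mono[rotated]) simp
qed

lemma mono_on_continuous_on_gt_near_left:
  fixes \<alpha> :: "real \<Rightarrow> real"
  assumes "mono_on S \<alpha>" "continuous_on S \<alpha>" "v \<in> S" "e < \<alpha> v"
  obtains d where "d > 0" "\<And>t. t \<in> S \<Longrightarrow> v - d < t \<Longrightarrow> e < \<alpha> t"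
proof -
  have "\<alpha> v - e > 0" using assms(4) by simp
  then obtain d where "d > 0"
    and d: "\<And>t. t \<in> S \<Longrightarrow> dist t v < d \<Longrightarrow> dist (\<alpha> t) (\<alpha> v) < \<alpha> v - e"
    using assms(2,3) unfolding continuous_on_iff by blast
  have "e < \<alpha> t" if "t \<in> S" "v - d < t" for t
  proof (cases "v \<le> t")
    case True
    then show ?thesis using mono_onD[OF assms(1) \<open>v \<in> S\<close> \<open>t \<in> S\<close>] assms(4) by simp
  next
    case False
    then have "dist t v < d" using that by (simp add: dist_real_def)
    then show ?thesis using d[OF \<open>t \<in> S\<close>] by (simp add: dist_real_def)
  qed
  with \<open>d > 0\<close> show ?thesis using that by blast
qed

lemma nu_upper:
  assumes "bdd_above ((\<lambda>x. \<phi> ((T ^^ j) x)) ` Xin)" "x \<in> Xin"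
  shows "\<phi> ((T ^^ j) x) \<le> nu T \<phi> Xin j"
  unfolding nu_def using assms by (intro cSUP_upper)

lemma orbit_value_in_Iphi:
  assumes "x \<in> Xin"
  shows "\<phi> ((T ^^ j) x) \<in> Iphi T \<phi> Xin"
  unfolding Iphi_def using assms
  by (intro subsetD[OF closure_subset] subsetD[OF hull_subset]) blast

lemma nu_in_Iphi:
  assumes "bdd_above ((\<lambda>x. \<phi> ((T ^^ k) x)) ` Xin)" "Xin \<noteq> {}"
  shows "nu T \<phi> Xin k \<in> Iphi T \<phi> Xin"
proof -
  let ?W = "(\<lambda>x. \<phi> ((T ^^ k) x)) ` Xin"
  have "Sup ?W \<in> closure ?W"
    using assms by (intro closure_contains_Sup) auto
  moreover have "closure ?W \<subseteq> Iphi T \<phi> Xin"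
    unfolding Iphi_def by (intro closure_mono subset_trans[OF _ hull_subset]) blast
  ultimately show ?thesis
    unfolding nu_def by blast
qed

lemma affine_in_SC:
  fixes L :: real
  assumes "L > 0"
  shows "(\<lambda>t. (t - a) / L) \<in> SC T \<phi> Xin"
proof -
  have "(\<lambda>t. (t - a) / L) ` {a..a + L} = {0..1}"
    using assms image_affinity_atLeastAtMost_div_diff[of L "a / L" a "a + L"]
    by (simp add: diff_divide_distrib add_divide_distrib)
  moreover have "strict_mono_on S (\<lambda>t. (t - a) / L)" for S
    using assms by (intro strict_mono_onI) (simp add: divide_strict_right_mono)
  moreover have "continuous_on S (\<lambda>t. (t - a) / L)" for S
    using assms by (intro continuous_intros) auto
  ultimately show ?thesis
    unfolding SC_def by (intro CollectI exI[of _ "{a..a + L}"]) (simp add: is_interval_cc)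
qed

lemma compatible_at_imp_certificate:
  assumes bdd: "\<And>j. bdd_above ((\<lambda>x. \<phi> ((T ^^ j) x)) ` Xin)"
    and g_nonneg: "\<And>y. 0 \<le> g y"
    and "compatible_at Xin T \<phi> g k"
  shows "\<exists>\<alpha>. certificate Xin T \<phi> g \<alpha>"
proof -
  define \<nu> where "\<nu> = nu T \<phi> Xin"
  obtain \<epsilon> \<eta> where k: "k \<in> Ggt T \<phi> Xin" and "\<epsilon> > 0" "\<eta> > 0"
    and g_big: "\<And>x j. x \<in> Xin \<Longrightarrow> \<phi> ((T ^^ j) x) > \<nu> k - \<eta> \<Longrightarrow> g ((T ^^ j) x) > ereal \<epsilon>"
    using assms(3) unfolding compatible_at_def \<nu>_def by blast
  have "bdd_above (range \<nu>)"
    using k unfolding Ggt_def \<nu>_def by (auto intro: bdd_above_of_limsup_less)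
  then obtain M where M: "\<And>n. \<nu> n \<le> M"
    by (auto simp: bdd_above_def)
  define a where "a = \<nu> k - \<eta>"
  define L where "L = (M - a) / \<epsilon>"
  define \<alpha> where "\<alpha> = (\<lambda>t. (t - a) / L)"
  have "a < M" using M[of k] \<open>\<eta> > 0\<close> unfolding a_def by simp
  then have "L > 0" unfolding L_def using \<open>\<epsilon> > 0\<close> by simp
  have "ereal (\<alpha> (\<phi> ((T ^^ j) x))) \<le> g ((T ^^ j) x)" if "x \<in> Xin" for j x
  proof (cases "\<phi> ((T ^^ j) x) > a")
    case True
    have "\<phi> ((T ^^ j) x) \<le> M"
      using nu_upper[OF bdd \<open>x \<in> Xin\<close>, of j] M[of j] unfolding \<nu>_def by linarith
    then have "\<alpha> (\<phi> ((T ^^ j) x)) \<le> (M - a) / L"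
      unfolding \<alpha>_def using \<open>L > 0\<close> by (simp add: divide_right_mono)
    also have "\<dots> = \<epsilon>" unfolding L_def using \<open>a < M\<close> \<open>\<epsilon> > 0\<close> by simp
    finally have "ereal (\<alpha> (\<phi> ((T ^^ j) x))) \<le> ereal \<epsilon>" by simp
    also have "\<dots> \<le> g ((T ^^ j) x)"
      using g_big[OF \<open>x \<in> Xin\<close>] True unfolding a_def by (simp add: less_imp_le)
    finally show ?thesis .
  next
    case False
    then have "\<alpha> (\<phi> ((T ^^ j) x)) \<le> 0"
      unfolding \<alpha>_def using \<open>L > 0\<close> by (simp add: divide_nonpos_pos)
    then have "ereal (\<alpha> (\<phi> ((T ^^ j) x))) \<le> 0" by simp
    also have "\<dots> \<le> g ((T ^^ j) x)" by (rule g_nonneg)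
    finally show ?thesis .
  qed
  moreover have "\<alpha> (\<nu> k) > 0" unfolding \<alpha>_def a_def using \<open>\<eta> > 0\<close> \<open>L > 0\<close> by simp
  ultimately have "certificate Xin T \<phi> g \<alpha>"
    using affine_in_SC[OF \<open>L > 0\<close>] k unfolding certificate_def \<alpha>_def \<nu>_def by blast
  then show ?thesis by blast
qed

lemma certificate_imp_compatible_at:
  assumes "\<And>j. bdd_above ((\<lambda>x. \<phi> ((T ^^ j) x)) ` Xin)" "Xin \<noteq> {}"
    and "certificate Xin T \<phi> g \<alpha>"
  shows "\<exists>k. compatible_at Xin T \<phi> g k"
proof -
  obtain k where "\<alpha> \<in> SC T \<phi> Xin" and k: "k \<in> Ggt T \<phi> Xin" and pos: "\<alpha> (nu T \<phi> Xin k) > 0"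
    and g_ge: "\<And>j x. x \<in> Xin \<Longrightarrow> ereal (\<alpha> (\<phi> ((T ^^ j) x))) \<le> g ((T ^^ j) x)"
    using assms(3) unfolding certificate_def by blast
  then obtain I where mono: "strict_mono_on (convex hull (Iphi T \<phi> Xin \<union> I)) \<alpha>"
    and cont: "continuous_on (convex hull (Iphi T \<phi> Xin \<union> I)) \<alpha>"
    unfolding SC_def by blast
  define S where "S = convex hull (Iphi T \<phi> Xin \<union> I)"
  have Iphi_S: "Iphi T \<phi> Xin \<subseteq> S"
    unfolding S_def by (rule subset_trans[OF Un_upper1 hull_subset])
  define v where "v = nu T \<phi> Xin k"
  have "v \<in> S" using Iphi_S nu_in_Iphi[OF assms(1,2)] unfolding v_def by blast
  moreover have "\<alpha> v / 2 < \<alpha> v" using pos unfolding v_def by simp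
  ultimately obtain d where "d > 0"
    and near: "\<And>t. t \<in> S \<Longrightarrow> v - d < t \<Longrightarrow> \<alpha> v / 2 < \<alpha> t"
    using mono_on_continuous_on_gt_near_left[OF strict_mono_on_imp_mono_on[OF mono] cont]
    unfolding S_def by blast
  have "g ((T ^^ j) x) > ereal (\<alpha> v / 2)" if "x \<in> Xin" "\<phi> ((T ^^ j) x) > v - d" for x j
  proof -
    have "ereal (\<alpha> v / 2) < ereal (\<alpha> (\<phi> ((T ^^ j) x)))"
      using near[OF subsetD[OF Iphi_S orbit_value_in_Iphi[OF \<open>x \<in> Xin\<close>]] that(2)] by simp
    also have "\<dots> \<le> g ((T ^^ j) x)" using g_ge[OF \<open>x \<in> Xin\<close>] .
    finally show ?thesis .
  qed
  moreover have "\<alpha> v / 2 > 0" using pos unfolding v_def by simp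
  ultimately show ?thesis
    using k \<open>d > 0\<close> unfolding compatible_at_def v_def by blast
qed

theorem mainTheorem17:
  fixes Xin :: "(real ^ 'd) set" and T :: "real ^ 'd \<Rightarrow> real ^ 'd"
    and \<phi> :: "real ^ 'd \<Rightarrow> real" and g :: "real ^ 'd \<Rightarrow> ereal"
  assumes "Xin \<noteq> {}"
    and "\<phi> 0 = 0"
    and "\<And>k. bdd_above ((\<lambda>x. \<phi> ((T ^^ k) x)) ` Xin)"
    and "g \<in> PSD"
    and "{(T ^^ k) x | k x. x \<in> Xin} \<subseteq> dom_ext g"
  shows "compatible Xin T \<phi> g \<longleftrightarrow> (\<exists>\<alpha>. certificate Xin T \<phi> g \<alpha>)"
proof
  assume "compatible Xin T \<phi> g"
  moreover have "\<And>y. 0 \<le> g y" using \<open>g \<in> PSD\<close> unfolding PSD_def by blast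
  ultimately show "\<exists>\<alpha>. certificate Xin T \<phi> g \<alpha>"
    using compatible_at_imp_certificate[OF assms(3)] unfolding compatible_def by blast
next
  assume "\<exists>\<alpha>. certificate Xin T \<phi> g \<alpha>"
  then show "compatible Xin T \<phi> g"
    using certificate_imp_compatible_at[OF assms(3,1)]
    unfolding compatible_def compatible_at_def by blast
qed

end
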